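(* Let $\Sigma=(\tilde{\mathbf x},\tilde B(Q))$ be a $(G,\psi)$-admissible seed, and let $K$ be a mutable $G$-orbit. If the quiver $\mu_K(Q)$ is $G$-admissible, then the seed $\mu_K(\Sigma)$ is $(G,\psi)$-admissible, and $(\mu_K(\Sigma))^G=\mu_K(\Sigma^G)$.
   Context: $Q$ is a quiver with vertices $1,\dots,m$, mutable $1,\dots,n$, frozen $n+1,\dots,m$; $\tilde B(Q)=(b_{ij})$ is the $m\times n$ matrix with $b_{ij}$ = #arrows $i\to j$ minus #arrows $j\to i$. A seed $(\tilde{\mathbf x},\tilde B)$ in a field $\mathcal F$ consists of a free generating tuple $\tilde{\mathbf x}=(x_1,\dots,x_m)$ of $\mathcal F$ and such a matrix; mutation at mutable $k$ replaces $\tilde B$ by its matrix mutation ($b'_{ij}=-b_{ij}$ if $k\in\{i,j\}$, else $b_{ij}+\mathrm{sgn}(b_{ik})\max(b_{ik}b_{kj},0)$) and $x_k$ by $x_k'=(\prod_{b_{ik}>0}x_i^{b_{ik}}+\prod_{b_{ik}<0}x_i^{-b_{ik}})/x_k$ (products over $i\le m$). A group $G$ acts on $\{1,\dots,m\}$ mapping $\{1,\dots,n\}$ to itself; $i\sim i'$ means same orbit; $m^G$ is the number of orbits. $Q$ is $G$-admissible if: (1) $i\sim i'$ implies $i$ mutable iff $i'$ mutable; (2) $b_{ij}=b_{g(i),g(j)}$; (3) $b_{ii'}=0$ for mutable $i\sim i'$; (4) $b_{ij}b_{i'j}\ge0$ for $i\sim i'$, $j$ mutable. Then $\tilde B^G=(b^G_{IJ})$,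 rows indexed by orbits and columns by mutable orbits, $b^G_{IJ}=\sum_{i\in I}b_{ij}$ ($j\in J$ arbitrary). $\mathcal F$ (resp. $\mathcal F^G$) is a field of rational functions in $m$ (resp. $m^G$) variables, $\mathcal F_{\mathrm{sf}}$, $\mathcal F^G_{\mathrm{sf}}$ the semifields of subtraction-free rational expressions, and $\psi:\mathcal F_{\mathrm{sf}}\to\mathcal F^G_{\mathrm{sf}}$ a surjective semifield homomorphism. A seed $\Sigma=(\tilde{\mathbf x},\tilde B(Q))$ in $\mathcal F$ is $(G,\psi)$-admissible if $Q$ is $G$-admissible and $\psi(x_i)=\psi(x_{i'})$ whenever $i\sim i'$; its folded seed is $\Sigma^G=(\tilde{\mathbf x}^G,\tilde B^G)$ in $\mathcal F^G$ with $\tilde{\mathbf x}^G=(x_I)$, $x_I=\psi(x_i)$ for $i\in I$. For a mutable orbit $K$, $\mu_K$ on $\Sigma$ denotes the composition of the (commuting) mutations at all $k\in K$, and on $\Sigma^G$ the single mutation at the index $K$. *)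

theory Defs
  imports Main "HOL-Algebra.Group_Action"
begin

text \<open>A polynomial in the variables indexed by 1..m with coefficients in a set k:
  a finitely supported coefficient function on exponent vectors supported in 1..m.\<close>
definition is_poly :: "'a::field set \<Rightarrow> nat \<Rightarrow> ((nat \<Rightarrow> nat) \<Rightarrow> 'a) \<Rightarrow> bool" where
  "is_poly k m c \<longleftrightarrow> finite {e. c e \<noteq> 0} \<and>
     (\<forall>e. c e \<noteq> 0 \<longrightarrow> c e \<in> k \<and> (\<forall>i. i \<notin> {1..m} \<longrightarrow> e i = 0))"

definition poly_eval :: "((nat \<Rightarrow> nat) \<Rightarrow> 'a::field) \<Rightarrow> nat \<Rightarrow> (nat \<Rightarrow> 'a) \<Rightarrow> 'a" where
  "poly_eval c m x = (\<Sum>e\<in>{e. c e \<noteq> 0}. c e * (\<Prod>i\<in>{1..m}. x i ^ e i))"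

definition is_subfield :: "'a::field set \<Rightarrow> bool" where
  "is_subfield k \<longleftrightarrow> 0 \<in> k \<and> 1 \<in> k \<and> (\<forall>a\<in>k. \<forall>b\<in>k. a + b \<in> k \<and> a - b \<in> k \<and> a * b \<in> k)
     \<and> (\<forall>a\<in>k. inverse a \<in> k)"

definition free_generating :: "'a::field set \<Rightarrow> nat \<Rightarrow> (nat \<Rightarrow> 'a) \<Rightarrow> bool" where
  "free_generating k m x \<longleftrightarrow>
     (\<forall>c. is_poly k m c \<and> poly_eval c m x = 0 \<longrightarrow> (\<forall>e. c e = 0)) \<and>
     (\<forall>y. \<exists>p q. is_poly k m p \<and> is_poly k m q \<and> poly_eval q m x \<noteq> 0 \<and>
                y = poly_eval p m x / poly_eval q m x)"

definition rational_function_field :: "'a::field set \<Rightarrow> nat \<Rightarrow> (nat \<Rightarrow> 'a) \<Rightarrow> bool" where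
  "rational_function_field k m u \<longleftrightarrow> is_subfield k \<and> free_generating k m u"

text \<open>Semifield of subtraction-free rational expressions in u_1..u_m (inside the ambient field).\<close>
inductive_set sf_closure :: "nat \<Rightarrow> (nat \<Rightarrow> 'a::field) \<Rightarrow> 'a set" for m u where
  gen: "i \<in> {1..m} \<Longrightarrow> u i \<in> sf_closure m u"
| add: "a \<in> sf_closure m u \<Longrightarrow> b \<in> sf_closure m u \<Longrightarrow> a + b \<in> sf_closure m u"
| mult: "a \<in> sf_closure m u \<Longrightarrow> b \<in> sf_closure m u \<Longrightarrow> a * b \<in> sf_closure m u"
| divide: "a \<in> sf_closure m u \<Longrightarrow> b \<in> sf_closure m u \<Longrightarrow> a / b \<in> sf_closure m u"

definition semifield_hom_on :: "'a::field set \<Rightarrow> ('a \<Rightarrow> 'b::field) \<Rightarrow> bool" where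
  "semifield_hom_on S \<psi> \<longleftrightarrow> (\<forall>a\<in>S. \<forall>b\<in>S.
      \<psi> (a + b) = \<psi> a + \<psi> b \<and> \<psi> (a * b) = \<psi> a * \<psi> b \<and> \<psi> (a / b) = \<psi> a / \<psi> b)"

text \<open>A quiver on vertices 1..m given by arrow counts Q i j = number of arrows i -> j;
  no loops and no oriented 2-cycles.\<close>
definition is_quiver :: "nat \<Rightarrow> (nat \<Rightarrow> nat \<Rightarrow> nat) \<Rightarrow> bool" where
  "is_quiver m Q \<longleftrightarrow> (\<forall>i j. (i \<notin> {1..m} \<or> j \<notin> {1..m}) \<longrightarrow> Q i j = 0) \<and>
     (\<forall>i. Q i i = 0) \<and> (\<forall>i j. Q i j = 0 \<or> Q j i = 0)"

text \<open>b_ij = #arrows i->j minus #arrows j->i (only entries with i<=m, j<=n mutable matter).\<close>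
definition Btil :: "(nat \<Rightarrow> nat \<Rightarrow> nat) \<Rightarrow> nat \<Rightarrow> nat \<Rightarrow> int" where
  "Btil Q i j = int (Q i j) - int (Q j i)"

text \<open>Quiver mutation at k: add i->j for each path i->k->j, reverse arrows at k,
  remove a maximal collection of oriented 2-cycles.\<close>
definition quiver_mut :: "nat \<Rightarrow> (nat \<Rightarrow> nat \<Rightarrow> nat) \<Rightarrow> nat \<Rightarrow> nat \<Rightarrow> nat" where
  "quiver_mut k Q i j =
     (if i = k \<or> j = k then Q j i
      else (let c = Q i j + Q i k * Q k j; d = Q j i + Q j k * Q k i in c - min c d))"

definition mat_mut :: "'i \<Rightarrow> ('i \<Rightarrow> 'i \<Rightarrow> int) \<Rightarrow> 'i \<Rightarrow> 'i \<Rightarrow> int" where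
  "mat_mut k B i j =
     (if i = k \<or> j = k then - B i j
      else B i j + sgn (B i k) * max (B i k * B k j) 0)"

definition clus_mut :: "'i set \<Rightarrow> 'i \<Rightarrow> ('i \<Rightarrow> 'i \<Rightarrow> int) \<Rightarrow> ('i \<Rightarrow> 'a::field) \<Rightarrow> 'i \<Rightarrow> 'a" where
  "clus_mut Ix k B x = x(k :=
     ((\<Prod>i\<in>{i\<in>Ix. B i k > 0}. x i ^ nat (B i k)) +
      (\<Prod>i\<in>{i\<in>Ix. B i k < 0}. x i ^ nat (- B i k))) / x k)"

definition seed_mut :: "'i set \<Rightarrow> 'i \<Rightarrow> ('i \<Rightarrow> 'a::field) \<times> ('i \<Rightarrow> 'i \<Rightarrow> int)
     \<Rightarrow> ('i \<Rightarrow> 'a) \<times> ('i \<Rightarrow> 'i \<Rightarrow> int)" where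
  "seed_mut Ix k S = (clus_mut Ix k (snd S) (fst S), mat_mut k (snd S))"

definition seed_mut_set :: "nat set \<Rightarrow> nat set \<Rightarrow> (nat \<Rightarrow> 'a::field) \<times> (nat \<Rightarrow> nat \<Rightarrow> int)
     \<Rightarrow> (nat \<Rightarrow> 'a) \<times> (nat \<Rightarrow> nat \<Rightarrow> int)" where
  "seed_mut_set Ix K S = foldl (\<lambda>S' k. seed_mut Ix k S') S (sorted_list_of_set K)"

definition quiver_mut_set :: "nat set \<Rightarrow> (nat \<Rightarrow> nat \<Rightarrow> nat) \<Rightarrow> nat \<Rightarrow> nat \<Rightarrow> nat" where
  "quiver_mut_set K Q = foldl (\<lambda>Q' k. quiver_mut k Q') Q (sorted_list_of_set K)"

definition G_admissible :: "('g, 'c) monoid_scheme \<Rightarrow> ('g \<Rightarrow> nat \<Rightarrow> nat) \<Rightarrow> nat \<Rightarrow> nat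
     \<Rightarrow> (nat \<Rightarrow> nat \<Rightarrow> int) \<Rightarrow> bool" where
  "G_admissible G \<phi> m n B \<longleftrightarrow>
     (\<forall>i\<in>{1..m}. \<forall>i'\<in>orbit G \<phi> i. (i \<le> n \<longleftrightarrow> i' \<le> n)) \<and>
     (\<forall>g\<in>carrier G. \<forall>i\<in>{1..m}. \<forall>j\<in>{1..n}. B i j = B (\<phi> g i) (\<phi> g j)) \<and>
     (\<forall>i\<in>{1..n}. \<forall>i'\<in>orbit G \<phi> i. B i i' = 0) \<and>
     (\<forall>i\<in>{1..m}. \<forall>i'\<in>orbit G \<phi> i. \<forall>j\<in>{1..n}. B i j * B i' j \<ge> 0)"

definition quiver_G_admissible :: "('g, 'c) monoid_scheme \<Rightarrow> ('g \<Rightarrow> nat \<Rightarrow> nat) \<Rightarrow> nat \<Rightarrow> nat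
     \<Rightarrow> (nat \<Rightarrow> nat \<Rightarrow> nat) \<Rightarrow> bool" where
  "quiver_G_admissible G \<phi> m n Q \<longleftrightarrow> G_admissible G \<phi> m n (Btil Q)"

text \<open>(G,psi)-admissibility of a seed (x, B) with B = B(Q); psi is only defined on F_sf,
  so the cluster variables are required to lie in F_sf.\<close>
definition Gpsi_admissible :: "('g, 'c) monoid_scheme \<Rightarrow> ('g \<Rightarrow> nat \<Rightarrow> nat) \<Rightarrow> nat \<Rightarrow> nat
     \<Rightarrow> 'a::field set \<Rightarrow> ('a \<Rightarrow> 'b::field) \<Rightarrow> (nat \<Rightarrow> 'a) \<times> (nat \<Rightarrow> nat \<Rightarrow> int) \<Rightarrow> bool" where
  "Gpsi_admissible G \<phi> m n Fsf \<psi> S \<longleftrightarrow>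
     G_admissible G \<phi> m n (snd S) \<and> (\<forall>i\<in>{1..m}. fst S i \<in> Fsf) \<and>
     (\<forall>i\<in>{1..m}. \<forall>i'\<in>orbit G \<phi> i. \<psi> (fst S i) = \<psi> (fst S i'))"

text \<open>Folded seed, indexed by orbits: b^G_IJ = sum_{i in I} b_ij (j in J), x_I = psi(x_i) (i in I).\<close>
definition fold_mat :: "(nat \<Rightarrow> nat \<Rightarrow> int) \<Rightarrow> nat set \<Rightarrow> nat set \<Rightarrow> int" where
  "fold_mat B I J = (\<Sum>i\<in>I. B i (SOME j. j \<in> J))"

definition fold_clus :: "('a \<Rightarrow> 'b) \<Rightarrow> (nat \<Rightarrow> 'a) \<Rightarrow> nat set \<Rightarrow> 'b" where
  "fold_clus \<psi> x I = \<psi> (x (SOME i. i \<in> I))"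

definition fold_seed :: "('a \<Rightarrow> 'b) \<Rightarrow> (nat \<Rightarrow> 'a) \<times> (nat \<Rightarrow> nat \<Rightarrow> int)
     \<Rightarrow> (nat set \<Rightarrow> 'b) \<times> (nat set \<Rightarrow> nat set \<Rightarrow> int)" where
  "fold_seed \<psi> S = (fold_clus \<psi> (fst S), fold_mat (snd S))"

definition folded_seed_eq :: "nat set set \<Rightarrow> nat set set
     \<Rightarrow> (nat set \<Rightarrow> 'b) \<times> (nat set \<Rightarrow> nat set \<Rightarrow> int)
     \<Rightarrow> (nat set \<Rightarrow> 'b) \<times> (nat set \<Rightarrow> nat set \<Rightarrow> int) \<Rightarrow> bool" where
  "folded_seed_eq Orbs MutOrbs S T \<longleftrightarrow>
     (\<forall>I\<in>Orbs. fst S I = fst T I) \<and> (\<forall>I\<in>Orbs. \<forall>J\<in>MutOrbs. snd S I J = snd T I J)"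

end

theory Submission
  imports Defs
begin

(*
  The vertices of a mutable orbit K are pairwise unconnected (admissibility (3)), so the
  mutations at the vertices of K commute and their composite has a closed form: every x_k,
  k in K, is mutated with the original matrix, and b_ij with i, j outside K receives the sum
  over k in K of the increments sgn(b_ik) max(b_ik b_kj, 0).  Summing over an orbit I, the
  signs of b_ik (i in I) agree by admissibility (4), so the sum of the increments is the
  increment of the sums; and by G-invariance the column sum of B over I at k does not depend
  on the choice of k in K, which makes it the folded entry b_IK.  For the cluster variables, psi turns each exchange monomial into a product over
  orbits whose exponents are again these column sums, so psi(x'_k) is the folded exchange
  relation at K for every k in K; in particular it is constant on K.
*)

section \<open>Quiver mutation and matrix mutation\<close>

definition mut_incr :: "int \<Rightarrow> int \<Rightarrow> int" where
  "mut_incr b c = sgn b * max (b * c) 0"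

lemma mat_mut_apart:
  "i \<noteq> k \<Longrightarrow> j \<noteq> k \<Longrightarrow> mat_mut k B i j = B i j + mut_incr (B i k) (B k j)"
  by (simp add: mat_mut_def mut_incr_def)

lemma mut_incr_zero [simp]: "mut_incr 0 c = 0" "mut_incr b 0 = 0"
  by (simp_all add: mut_incr_def)

definition no_two_cycles :: "(nat \<Rightarrow> nat \<Rightarrow> nat) \<Rightarrow> bool" where
  "no_two_cycles Q \<longleftrightarrow> (\<forall>i j. Q i j = 0 \<or> Q j i = 0)"

lemma no_two_cycles_quiver_mut: "no_two_cycles Q \<Longrightarrow> no_two_cycles (quiver_mut k Q)"
  unfolding no_two_cycles_def quiver_mut_def Let_def by (auto simp: min_def)

lemma Btil_quiver_mut:
  assumes "no_two_cycles Q"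
  shows "Btil (quiver_mut k Q) = mat_mut k (Btil Q)"
proof (intro ext)
  fix i j
  show "Btil (quiver_mut k Q) i j = mat_mut k (Btil Q) i j"
  proof (cases "i = k \<or> j = k")
    case True
    then show ?thesis by (auto simp: Btil_def quiver_mut_def mat_mut_def)
  next
    case False
    have "Q i k = 0 \<or> Q k i = 0" "Q k j = 0 \<or> Q j k = 0"
      using assms by (auto simp: no_two_cycles_def)
    then show ?thesis
      using False
      by (auto simp: Btil_def quiver_mut_def mat_mut_def Let_def min_def max_def sgn_if
          zero_less_mult_iff mult_less_0_iff mult_le_0_iff)
  qed
qed

lemma Btil_foldl_quiver_mut:
  "no_two_cycles Q \<Longrightarrow>
    Btil (foldl (\<lambda>Q k. quiver_mut k Q) Q ks) = foldl (\<lambda>B k. mat_mut k B) (Btil Q) ks"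
  by (induction ks arbitrary: Q) (auto simp: Btil_quiver_mut no_two_cycles_quiver_mut)

section \<open>Mutation at pairwise unconnected vertices\<close>

definition mat_mut_simultaneous :: "'i set \<Rightarrow> ('i \<Rightarrow> 'i \<Rightarrow> int) \<Rightarrow> 'i \<Rightarrow> 'i \<Rightarrow> int" where
  "mat_mut_simultaneous K B i j =
     (if i \<in> K \<or> j \<in> K then - B i j else B i j + (\<Sum>k\<in>K. mut_incr (B i k) (B k j)))"

definition clus_mut_simultaneous ::
    "'i set \<Rightarrow> 'i set \<Rightarrow> ('i \<Rightarrow> 'i \<Rightarrow> int) \<Rightarrow> ('i \<Rightarrow> 'a::field) \<Rightarrow> 'i \<Rightarrow> 'a" where
  "clus_mut_simultaneous Ix K B x i = (if i \<in> K then clus_mut Ix i B x i else x i)"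

lemma mat_mut_simultaneous_unchanged_at:
  assumes "k \<notin> K" "\<forall>a\<in>insert k K. \<forall>b\<in>insert k K. B a b = 0"
  shows "mat_mut_simultaneous K B i k = B i k" "mat_mut_simultaneous K B k j = B k j"
  using assms by (auto simp: mat_mut_simultaneous_def)

lemma foldl_mat_mut_disconnected:
  assumes "distinct ks" "\<forall>a\<in>set ks. \<forall>b\<in>set ks. B a b = 0"
  shows "foldl (\<lambda>B k. mat_mut k B) B ks = mat_mut_simultaneous (set ks) B"
  using assms
proof (induction ks rule: rev_induct)
  case Nil
  show ?case by (auto simp: mat_mut_simultaneous_def)
next
  case (snoc k ks)
  let ?B' = "mat_mut_simultaneous (set ks) B"
  have k: "k \<notin> set ks" "\<forall>a\<in>insert k (set ks). \<forall>b\<in>insert k (set ks). B a b = 0"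
    using snoc.prems by auto
  have "mat_mut k ?B' = mat_mut_simultaneous (insert k (set ks)) B"
  proof (intro ext)
    fix i j
    show "mat_mut k ?B' i j = mat_mut_simultaneous (insert k (set ks)) B i j"
    proof (cases "i = k \<or> j = k")
      case True
      then have "mat_mut k ?B' i j = - B i j"
        using mat_mut_simultaneous_unchanged_at[OF k] by (auto simp: mat_mut_def)
      then show ?thesis
        using True by (auto simp: mat_mut_simultaneous_def)
    next
      case False
      then have "mat_mut k ?B' i j = ?B' i j + mut_incr (B i k) (B k j)"
        using mat_mut_simultaneous_unchanged_at[OF k] by (simp add: mat_mut_apart)
      then show ?thesis
        using False k by (auto simp: mat_mut_simultaneous_def)
    qed
  qed
  then show ?case
    using snoc by simp
qed

lemma foldl_seed_mut_disconnected:
  assumes "distinct ks" "\<forall>a\<in>set ks. \<forall>b\<in>set ks. B a b = 0"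
  shows "foldl (\<lambda>S k. seed_mut Ix k S) (x, B) ks =
           (clus_mut_simultaneous Ix (set ks) B x, mat_mut_simultaneous (set ks) B)"
  using assms
proof (induction ks rule: rev_induct)
  case Nil
  show ?case by (auto simp: clus_mut_simultaneous_def mat_mut_simultaneous_def fun_eq_iff)
next
  case (snoc k ks)
  let ?x' = "clus_mut_simultaneous Ix (set ks) B x" and ?B' = "mat_mut_simultaneous (set ks) B"
  have k: "k \<notin> set ks" "\<forall>a\<in>insert k (set ks). \<forall>b\<in>insert k (set ks). B a b = 0"
    using snoc.prems by auto
  \<comment> \<open>the exchange relation at k only sees the cluster variables x i with B i k \<noteq> 0,
    none of which has been mutated yet\<close>
  have "clus_mut Ix k ?B' ?x' k = clus_mut Ix k B x k"
    using mat_mut_simultaneous_unchanged_at(1)[OF k] k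
    unfolding clus_mut_def clus_mut_simultaneous_def
    by (auto intro!: arg_cong2[where f = "(+)"] arg_cong2[where f = "(/)"] prod.cong)
  then have "clus_mut Ix k ?B' ?x' = clus_mut_simultaneous Ix (insert k (set ks)) B x"
    by (auto simp: fun_eq_iff clus_mut_def clus_mut_simultaneous_def)
  moreover have "mat_mut k ?B' = mat_mut_simultaneous (insert k (set ks)) B"
    using foldl_mat_mut_disconnected[OF snoc.prems] foldl_mat_mut_disconnected[of ks B] snoc.prems
    by simp
  ultimately show ?case
    using snoc by (simp add: seed_mut_def)
qed

lemma seed_mut_set_disconnected:
  assumes "finite K" "\<forall>a\<in>K. \<forall>b\<in>K. B a b = 0"
  shows "seed_mut_set Ix K (x, B) = (clus_mut_simultaneous Ix K B x, mat_mut_simultaneous K B)"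
  using foldl_seed_mut_disconnected[of "sorted_list_of_set K" B Ix x] assms
  by (simp add: seed_mut_set_def)

lemma Btil_quiver_mut_set_disconnected:
  assumes "no_two_cycles Q" "finite K" "\<forall>a\<in>K. \<forall>b\<in>K. Btil Q a b = 0"
  shows "Btil (quiver_mut_set K Q) = mat_mut_simultaneous K (Btil Q)"
  using Btil_foldl_quiver_mut[OF assms(1)] foldl_mat_mut_disconnected[of "sorted_list_of_set K"] assms(2,3)
  by (simp add: quiver_mut_set_def)

section \<open>Sign-coherent sums\<close>

definition sign_coherent :: "'i set \<Rightarrow> ('i \<Rightarrow> int) \<Rightarrow> bool" where
  "sign_coherent A h \<longleftrightarrow> (\<forall>a\<in>A. h a \<ge> 0) \<or> (\<forall>a\<in>A. h a \<le> 0)"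

lemma sign_coherent_uminus: "sign_coherent A h \<Longrightarrow> sign_coherent A (\<lambda>a. - h a)"
  by (auto simp: sign_coherent_def)

lemma mut_incr_linear_left:
  "b \<ge> 0 \<Longrightarrow> mut_incr b c = b * max c 0" "b \<le> 0 \<Longrightarrow> mut_incr b c = b * max (- c) 0"
  by (auto simp: mut_incr_def sgn_if max_def mult_le_0_iff zero_le_mult_iff)

lemma mut_incr_linear_right:
  "c \<ge> 0 \<Longrightarrow> mut_incr b c = max b 0 * c" "c \<le> 0 \<Longrightarrow> mut_incr b c = max (- b) 0 * c"
  by (auto simp: mut_incr_def sgn_if max_def mult_le_0_iff zero_le_mult_iff)

lemma sum_mut_incr_left:
  assumes "sign_coherent A h"
  shows "(\<Sum>a\<in>A. mut_incr (h a) c) = mut_incr (\<Sum>a\<in>A. h a) c"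
  using assms unfolding sign_coherent_def
  by (auto simp: mut_incr_linear_left sum_nonneg sum_nonpos sum_distrib_right)

lemma sum_mut_incr_right:
  assumes "sign_coherent A h"
  shows "(\<Sum>a\<in>A. mut_incr b (h a)) = mut_incr b (\<Sum>a\<in>A. h a)"
  using assms unfolding sign_coherent_def
  by (auto simp: mut_incr_linear_right sum_nonneg sum_nonpos sum_distrib_left)

lemma sum_nat_sign_coherent:
  assumes "sign_coherent A h"
  shows "(\<Sum>a\<in>A. nat (h a)) = nat (\<Sum>a\<in>A. h a)"
  using assms unfolding sign_coherent_def
proof
  assume "\<forall>a\<in>A. h a \<ge> 0"
  then have "int (\<Sum>a\<in>A. nat (h a)) = (\<Sum>a\<in>A. h a)"
    by (simp add: of_nat_sum)
  then show ?thesis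
    by linarith
next
  assume "\<forall>a\<in>A. h a \<le> 0"
  then show ?thesis
    by (simp add: sum_nonpos)
qed

lemma prod_positive_powers:
  fixes y :: "'i \<Rightarrow> 'b::comm_monoid_mult"
  assumes "finite A"
  shows "(\<Prod>a\<in>{a\<in>A. h a > 0}. y a ^ nat (h a)) = (\<Prod>a\<in>A. y a ^ nat (h a))"
  using assms by (intro prod.mono_neutral_left) (auto simp: not_less)

lemma prod_positive_powers_blocks:
  fixes y :: "'i \<Rightarrow> 'b::comm_monoid_mult"
  assumes "finite A" "\<Union>Bs = A" "\<forall>I\<in>Bs. \<forall>J\<in>Bs. I \<noteq> J \<longrightarrow> I \<inter> J = {}"
    and const: "\<forall>I\<in>Bs. \<forall>i\<in>I. y i = Y I"
    and coherent: "\<forall>I\<in>Bs. sign_coherent I h"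
  shows "(\<Prod>i\<in>{i\<in>A. h i > 0}. y i ^ nat (h i))
       = (\<Prod>I\<in>{I\<in>Bs. sum h I > 0}. Y I ^ nat (sum h I))"
proof -
  have fin: "finite Bs" "\<forall>I\<in>Bs. finite I"
    using assms(1,2) by (metis finite_UnionD) (metis Sup_upper assms(1,2) finite_subset)
  have "(\<Prod>i\<in>A. y i ^ nat (h i)) = (\<Prod>I\<in>Bs. \<Prod>i\<in>I. y i ^ nat (h i))"
    using prod.Union_disjoint[OF fin(2) assms(3)] assms(2) by (simp add: o_def)
  also have "\<dots> = (\<Prod>I\<in>Bs. Y I ^ nat (sum h I))"
  proof (rule prod.cong[OF refl])
    fix I
    assume "I \<in> Bs"
    then have "(\<Prod>i\<in>I. y i ^ nat (h i)) = Y I ^ (\<Sum>i\<in>I. nat (h i))"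
      using const by (simp add: power_sum)
    then show "(\<Prod>i\<in>I. y i ^ nat (h i)) = Y I ^ nat (sum h I)"
      using sum_nat_sign_coherent coherent \<open>I \<in> Bs\<close> by metis
  qed
  finally show ?thesis
    unfolding prod_positive_powers[OF assms(1)] prod_positive_powers[OF fin(1)] .
qed

section \<open>Subtraction-free expressions\<close>

lemma free_generating_nonzero:
  assumes "is_subfield k" "free_generating k m x" "i \<in> {1..m}"
  shows "x i \<noteq> 0"
proof
  assume x0: "x i = 0"
  define d where "d = (\<lambda>j::nat. if j = i then 1 else (0::nat))"
  define c where "c = (\<lambda>e. if e = d then 1 else (0::'a))"
  have supp: "{e. c e \<noteq> 0} = {d}"
    by (auto simp: c_def)
  have "is_poly k m c"
    using assms(1,3) by (auto simp: is_poly_def supp c_def d_def is_subfield_def)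
  moreover have "poly_eval c m x = x i"
  proof -
    have "poly_eval c m x = (\<Prod>j\<in>{1..m}. x j ^ d j)"
      by (simp add: poly_eval_def supp c_def)
    also have "\<dots> = (\<Prod>j\<in>{1..m}. if j = i then x j else 1)"
      by (rule prod.cong) (auto simp: d_def)
    finally show ?thesis
      using assms(3) by simp
  qed
  ultimately have "\<forall>e. c e = 0"
    using assms(2) x0 by (auto simp: free_generating_def)
  then show False
    by (metis c_def one_neq_zero)
qed

lemma one_in_sf_closure:
  assumes "i \<in> {1..m}" "u i \<noteq> 0"
  shows "1 \<in> sf_closure m u"
proof -
  have "u i \<in> sf_closure m u"
    using assms(1) by (rule sf_closure.gen)
  then have "u i / u i \<in> sf_closure m u"
    using sf_closure.divide by blast
  then show ?thesis
    using assms(2) by simp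
qed

lemma semifield_hom_one:
  assumes "semifield_hom_on S \<psi>" "1 \<in> S" "a \<in> S" "\<psi> a \<noteq> 0"
  shows "\<psi> 1 = 1"
proof -
  have "\<psi> a * \<psi> 1 = \<psi> a * 1"
    using assms(1-3) unfolding semifield_hom_on_def by (metis mult.right_neutral)
  then show ?thesis
    using assms(4) by simp
qed

lemma surj_semifield_hom_one:
  assumes "rational_function_field k m u" "rational_function_field k' m' v"
    and hom: "semifield_hom_on (sf_closure m u) \<psi>" and surj: "\<psi> ` sf_closure m u = sf_closure m' v"
    and "1 \<le> m" "1 \<le> m'"
  shows "1 \<in> sf_closure m u \<and> \<psi> 1 = 1"
proof -
  have "u 1 \<noteq> 0" "v 1 \<noteq> 0"
    using assms(1,2,5,6) free_generating_nonzero[of _ _ _ 1]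
    unfolding rational_function_field_def by auto
  then have one: "1 \<in> sf_closure m u"
    using one_in_sf_closure[of 1 m u] \<open>1 \<le> m\<close> by simp
  obtain a where "a \<in> sf_closure m u" "\<psi> a = v 1"
    using sf_closure.gen[of 1 m' v] surj \<open>1 \<le> m'\<close> by (metis atLeastAtMost_iff imageE order_refl)
  then show ?thesis
    using semifield_hom_one[OF hom one] one \<open>v 1 \<noteq> 0\<close> by simp
qed

lemma sf_closure_power_hom:
  assumes "semifield_hom_on (sf_closure m u) \<psi>" "1 \<in> sf_closure m u" "\<psi> 1 = 1"
    and "a \<in> sf_closure m u"
  shows "a ^ e \<in> sf_closure m u \<and> \<psi> (a ^ e) = \<psi> a ^ e"
proof (induction e)
  case 0
  then show ?case using assms by simp
next
  case (Suc e)
  then show ?case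
    using assms sf_closure.mult[of a m u "a ^ e"] by (simp add: semifield_hom_on_def)
qed

lemma sf_closure_prod_hom:
  assumes "semifield_hom_on (sf_closure m u) \<psi>" "1 \<in> sf_closure m u" "\<psi> 1 = 1"
    and "finite A" "\<forall>i\<in>A. f i \<in> sf_closure m u"
  shows "prod f A \<in> sf_closure m u \<and> \<psi> (prod f A) = (\<Prod>i\<in>A. \<psi> (f i))"
  using assms(4,5)
proof (induction A rule: finite_induct)
  case empty
  then show ?case using assms by simp
next
  case (insert a A)
  then show ?case
    using assms sf_closure.mult[of "f a" m u "prod f A"] by (simp add: semifield_hom_on_def)
qed

lemma sf_closure_clus_mut_hom:
  assumes hom: "semifield_hom_on (sf_closure m u) \<psi>" "1 \<in> sf_closure m u" "\<psi> 1 = 1"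
    and "finite Ix" "k \<in> Ix" and x: "\<forall>i\<in>Ix. x i \<in> sf_closure m u"
  shows "clus_mut Ix k B x k \<in> sf_closure m u \<and>
         \<psi> (clus_mut Ix k B x k) = clus_mut Ix k B (\<lambda>i. \<psi> (x i)) k"
proof -
  have powers: "x i ^ e \<in> sf_closure m u \<and> \<psi> (x i ^ e) = \<psi> (x i) ^ e" if "i \<in> Ix" for i e
    using sf_closure_power_hom[OF hom] x that by blast
  define P where "P = (\<Prod>i\<in>{i\<in>Ix. B i k > 0}. x i ^ nat (B i k))"
  define M where "M = (\<Prod>i\<in>{i\<in>Ix. B i k < 0}. x i ^ nat (- B i k))"
  have P: "P \<in> sf_closure m u \<and> \<psi> P = (\<Prod>i\<in>{i\<in>Ix. B i k > 0}. \<psi> (x i) ^ nat (B i k))"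
    using sf_closure_prod_hom[OF hom, of "{i\<in>Ix. B i k > 0}" "\<lambda>i. x i ^ nat (B i k)"] powers
      \<open>finite Ix\<close> unfolding P_def by auto
  have M: "M \<in> sf_closure m u \<and> \<psi> M = (\<Prod>i\<in>{i\<in>Ix. B i k < 0}. \<psi> (x i) ^ nat (- B i k))"
    using sf_closure_prod_hom[OF hom, of "{i\<in>Ix. B i k < 0}" "\<lambda>i. x i ^ nat (- B i k)"] powers
      \<open>finite Ix\<close> unfolding M_def by auto
  have "clus_mut Ix k B x k = (P + M) / x k"
    by (simp add: clus_mut_def P_def M_def)
  moreover have "P + M \<in> sf_closure m u"
    using P M by (blast intro: sf_closure.add)
  moreover have "x k \<in> sf_closure m u"
    using x \<open>k \<in> Ix\<close> by blast
  ultimately show ?thesis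
    using P M hom(1) unfolding semifield_hom_on_def
    by (simp add: sf_closure.divide clus_mut_def P_def M_def)
qed

section \<open>Folding along an admissible group action\<close>

context group_action
begin

lemma orbit_subset: "x \<in> E \<Longrightarrow> orbit G \<phi> x \<subseteq> E"
  using element_image by (auto simp: orbit_def)

lemma orbit_eq_orbit:
  assumes "x \<in> E" "y \<in> orbit G \<phi> x"
  shows "orbit G \<phi> y = orbit G \<phi> x"
proof -
  have "y \<in> E" "x \<in> orbit G \<phi> y"
    using assms orbit_subset orbit_sym by blast+
  then show ?thesis
    using assms orbit_subset orbit_trans by blast
qed

lemma orbits_memberD:
  "I \<in> orbits G E \<phi> \<Longrightarrow> i \<in> I \<Longrightarrow> I = orbit G \<phi> i"
  using orbit_eq_orbit by (auto simp: orbits_def)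

lemma orbits_nonempty: "I \<in> orbits G E \<phi> \<Longrightarrow> I \<noteq> {}"
  using orbit_refl by (auto simp: orbits_def)

lemma orbits_disjoint:
  "I \<in> orbits G E \<phi> \<Longrightarrow> J \<in> orbits G E \<phi> \<Longrightarrow> I \<noteq> J \<Longrightarrow> i \<in> I \<Longrightarrow> i \<notin> J"
  using disjoint_union by blast

lemma bij_betw_orbit:
  assumes "I \<in> orbits G E \<phi>" "g \<in> carrier G"
  shows "bij_betw (\<phi> g) I I"
proof -
  interpret group G
    using group_hom group_hom.axioms(1) by blast
  have sub: "I \<subseteq> E"
    using assms(1) orbits_coverture by blast
  have maps: "\<phi> h i \<in> I" if "h \<in> carrier G" "i \<in> I" for h i
    using orbits_memberD[OF assms(1) that(2)] that by (auto simp: orbit_def)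
  have "i \<in> \<phi> g ` I" if "i \<in> I" for i
    using orbit_sym_aux[OF inv_closed[OF assms(2)], of i] maps[OF inv_closed[OF assms(2)] that]
      sub that assms(2) by (metis image_eqI inv_inv subsetD)
  then have "\<phi> g ` I = I"
    using maps assms(2) by blast
  then show ?thesis
    using inj_prop[OF assms(2)] sub by (auto simp: bij_betw_def intro: inj_on_subset)
qed

lemma finite_orbits: "finite E \<Longrightarrow> finite (orbits G E \<phi>)"
  using orbits_coverture finite_UnionD by metis

end

locale admissible_matrix = group_action G "{1..m}" \<phi>
  for G :: "('g, 'c) monoid_scheme" and m :: nat and \<phi> :: "'g \<Rightarrow> nat \<Rightarrow> nat" +
  fixes n :: nat and B :: "nat \<Rightarrow> nat \<Rightarrow> int"
  assumes n_le_m: "n \<le> m"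
    and mutable_stable: "\<forall>g\<in>carrier G. \<phi> g ` {1..n} \<subseteq> {1..n}"
    and admissible: "G_admissible G \<phi> m n B"
begin

lemma admissible_invariant:
  "g \<in> carrier G \<Longrightarrow> i \<in> {1..m} \<Longrightarrow> j \<in> {1..n} \<Longrightarrow> B (\<phi> g i) (\<phi> g j) = B i j"
  using admissible unfolding G_admissible_def by metis

lemma admissible_orbit_zero:
  "i \<in> {1..n} \<Longrightarrow> i' \<in> orbit G \<phi> i \<Longrightarrow> B i i' = 0"
  using admissible unfolding G_admissible_def by blast

lemma admissible_orbit_sign:
  "i \<in> {1..m} \<Longrightarrow> i' \<in> orbit G \<phi> i \<Longrightarrow> j \<in> {1..n} \<Longrightarrow> B i j * B i' j \<ge> 0"
  using admissible unfolding G_admissible_def by blast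

lemma mutable_orbit_subset: "J \<in> orbits G {1..n} \<phi> \<Longrightarrow> J \<subseteq> {1..n}"
  using mutable_stable by (force simp: orbits_def orbit_def image_subset_iff)

lemma mutable_orbit_in_orbits: "J \<in> orbits G {1..n} \<phi> \<Longrightarrow> J \<in> orbits G {1..m} \<phi>"
  using n_le_m by (auto simp: orbits_def)

lemma orbit_subset_vertices: "I \<in> orbits G {1..m} \<phi> \<Longrightarrow> I \<subseteq> {1..m}"
  using orbits_coverture by blast

lemma mutable_orbit_disconnected:
  assumes "K \<in> orbits G {1..n} \<phi>" "a \<in> K" "b \<in> K"
  shows "B a b = 0"
proof -
  have "K = orbit G \<phi> a" "a \<in> {1..n}"
    using orbits_memberD[OF mutable_orbit_in_orbits] mutable_orbit_subset assms by blast+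
  then show ?thesis
    using admissible_orbit_zero assms(3) by blast
qed

lemma orbit_column_sign_coherent:
  assumes "I \<in> orbits G {1..m} \<phi>" "j \<in> {1..n}"
  shows "sign_coherent I (\<lambda>i. B i j)"
proof (cases "\<exists>i\<in>I. B i j > 0")
  case True
  then obtain i0 where i0: "i0 \<in> I" "B i0 j > 0"
    by blast
  have "B i0 j * B i j \<ge> 0" if "i \<in> I" for i
    using admissible_orbit_sign orbits_memberD[OF assms(1) i0(1)] orbit_subset_vertices[OF assms(1)]
      i0(1) that assms(2)
    by blast
  then show ?thesis
    using i0(2) by (auto simp: sign_coherent_def zero_le_mult_iff)
next
  case False
  then show ?thesis
    by (auto simp: sign_coherent_def not_less)
qed

lemma orbit_column_sum_translate:
  assumes "I \<in> orbits G {1..m} \<phi>" "k \<in> {1..n}" "g \<in> carrier G"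
  shows "(\<Sum>i\<in>I. B i (\<phi> g k)) = (\<Sum>i\<in>I. B i k)"
proof -
  have "(\<Sum>i\<in>I. B i (\<phi> g k)) = (\<Sum>i\<in>I. B (\<phi> g i) (\<phi> g k))"
    using sum.reindex_bij_betw[OF bij_betw_orbit[OF assms(1,3)], of "\<lambda>i. B i (\<phi> g k)"] by simp
  also have "\<dots> = (\<Sum>i\<in>I. B i k)"
    using admissible_invariant assms orbit_subset_vertices[OF assms(1)] by (intro sum.cong) auto
  finally show ?thesis .
qed

lemma orbit_column_sum:
  assumes "I \<in> orbits G {1..m} \<phi>" "K \<in> orbits G {1..n} \<phi>" "k \<in> K"
  shows "(\<Sum>i\<in>I. B i k) = fold_mat B I K"
proof -
  obtain k0 where k0: "k0 \<in> {1..n}" "K = orbit G \<phi> k0"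
    using assms(2) by (auto simp: orbits_def)
  have "(\<Sum>i\<in>I. B i k') = (\<Sum>i\<in>I. B i k0)" if "k' \<in> K" for k'
    using that k0 orbit_column_sum_translate[OF assms(1) k0(1)] by (auto simp: orbit_def)
  moreover have "(SOME k. k \<in> K) \<in> K"
    using assms(3) by (rule someI)
  ultimately show ?thesis
    using assms(3) by (simp add: fold_mat_def)
qed

lemma fold_mat_mut_simultaneous:
  assumes I: "I \<in> orbits G {1..m} \<phi>" and J: "J \<in> orbits G {1..n} \<phi>"
    and K: "K \<in> orbits G {1..n} \<phi>"
  shows "fold_mat (mat_mut_simultaneous K B) I J = mat_mut K (fold_mat B) I J"
proof -
  define j where "j = (SOME j. j \<in> J)"
  have j: "j \<in> J" "j \<in> {1..n}"
    using orbits_nonempty[OF mutable_orbit_in_orbits[OF J]] mutable_orbit_subset[OF J] by (auto simp: j_def intro: someI)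
  have fold_J: "fold_mat C I' J = (\<Sum>i\<in>I'. C i j)" for C I'
    by (simp add: fold_mat_def j_def)
  show ?thesis
  proof (cases "I = K \<or> J = K")
    case True
    then show ?thesis
      using j(1) by (auto simp: fold_J mat_mut_def mat_mut_simultaneous_def sum_negf)
  next
    case False
    have apart: "i \<notin> K" "j \<notin> K" if "i \<in> I" for i
      using False orbits_disjoint[OF I mutable_orbit_in_orbits[OF K]]
        orbits_disjoint[OF mutable_orbit_in_orbits[OF J] mutable_orbit_in_orbits[OF K]] that j(1)
      by blast+
    have "(\<Sum>i\<in>I. mat_mut_simultaneous K B i j)
        = fold_mat B I J + (\<Sum>k\<in>K. \<Sum>i\<in>I. mut_incr (B i k) (B k j))"
      using apart by (simp add: mat_mut_simultaneous_def sum.distrib fold_J sum.swap[of _ K I])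
    also have "(\<Sum>k\<in>K. \<Sum>i\<in>I. mut_incr (B i k) (B k j)) = (\<Sum>k\<in>K. mut_incr (fold_mat B I K) (B k j))"
    proof (rule sum.cong[OF refl])
      fix k
      assume "k \<in> K"
      then have "sign_coherent I (\<lambda>i. B i k)"
        using orbit_column_sign_coherent[OF I] mutable_orbit_subset[OF K] by blast
      then show "(\<Sum>i\<in>I. mut_incr (B i k) (B k j)) = mut_incr (fold_mat B I K) (B k j)"
        using sum_mut_incr_left orbit_column_sum[OF I K \<open>k \<in> K\<close>] by metis
    qed
    also have "\<dots> = mut_incr (fold_mat B I K) (fold_mat B K J)"
      using sum_mut_incr_right[OF orbit_column_sign_coherent[OF mutable_orbit_in_orbits[OF K] j(2)]]
      by (simp add: fold_J)
    finally show ?thesis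
      using False by (simp add: fold_J mat_mut_def mut_incr_def)
  qed
qed

lemma clus_mut_fold:
  assumes K: "K \<in> orbits G {1..n} \<phi>" "k \<in> K"
    and const: "\<forall>I\<in>orbits G {1..m} \<phi>. \<forall>i\<in>I. y i = Y I"
  shows "clus_mut {1..m} k B y k = clus_mut (orbits G {1..m} \<phi>) K (fold_mat B) Y K"
proof -
  let ?Os = "orbits G {1..m} \<phi>"
  have partition: "finite {1..m}" "\<Union>?Os = {1..m}" "\<forall>I\<in>?Os. \<forall>J\<in>?Os. I \<noteq> J \<longrightarrow> I \<inter> J = {}"
    using orbits_coverture disjoint_union by auto
  have coherent: "\<forall>I\<in>?Os. sign_coherent I (\<lambda>i. B i k)"
    using orbit_column_sign_coherent mutable_orbit_subset[OF K(1)] K(2) by blast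
  have "(\<Prod>i\<in>{i\<in>{1..m}. B i k > 0}. y i ^ nat (B i k))
      = (\<Prod>I\<in>{I\<in>?Os. (\<Sum>i\<in>I. B i k) > 0}. Y I ^ nat (\<Sum>i\<in>I. B i k))"
    using prod_positive_powers_blocks[OF partition const coherent] .
  also have "\<dots> = (\<Prod>I\<in>{I\<in>?Os. fold_mat B I K > 0}. Y I ^ nat (fold_mat B I K))"
    using orbit_column_sum[OF _ K] by (intro prod.cong) auto
  finally have pos: "(\<Prod>i\<in>{i\<in>{1..m}. B i k > 0}. y i ^ nat (B i k))
      = (\<Prod>I\<in>{I\<in>?Os. fold_mat B I K > 0}. Y I ^ nat (fold_mat B I K))" .
  have "(\<Prod>i\<in>{i\<in>{1..m}. B i k < 0}. y i ^ nat (- B i k))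
      = (\<Prod>I\<in>{I\<in>?Os. (\<Sum>i\<in>I. - B i k) > 0}. Y I ^ nat (\<Sum>i\<in>I. - B i k))"
    using prod_positive_powers_blocks[OF partition const, of "\<lambda>i. - B i k"] coherent
    by (simp add: sign_coherent_uminus)
  also have "\<dots> = (\<Prod>I\<in>{I\<in>?Os. fold_mat B I K < 0}. Y I ^ nat (- fold_mat B I K))"
    using orbit_column_sum[OF _ K] by (intro prod.cong) (auto simp: sum_negf)
  finally have neg: "(\<Prod>i\<in>{i\<in>{1..m}. B i k < 0}. y i ^ nat (- B i k))
      = (\<Prod>I\<in>{I\<in>?Os. fold_mat B I K < 0}. Y I ^ nat (- fold_mat B I K))" .
  have "y k = Y K"
    using const K mutable_orbit_in_orbits by blast
  then show ?thesis
    by (simp only: clus_mut_def fun_upd_same pos neg)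
qed

lemma fold_clus_orbit:
  assumes "\<forall>i\<in>{1..m}. \<forall>i'\<in>orbit G \<phi> i. \<psi> (x i) = \<psi> (x i')"
    and "I \<in> orbits G {1..m} \<phi>" "i \<in> I"
  shows "\<psi> (x i) = fold_clus \<psi> x I"
proof -
  have "(SOME i. i \<in> I) \<in> I"
    using assms(3) by (rule someI)
  then have "\<psi> (x i) = \<psi> (x (SOME i. i \<in> I))"
    using assms(1) orbits_memberD[OF assms(2,3)] orbit_subset_vertices[OF assms(2)] assms(3) by blast
  then show ?thesis
    by (simp add: fold_clus_def)
qed

lemma clus_mut_fold_hom:
  assumes adm: "Gpsi_admissible G \<phi> m n (sf_closure r u) \<psi> (x, B)"
    and hom: "semifield_hom_on (sf_closure r u) \<psi>" "1 \<in> sf_closure r u" "\<psi> 1 = 1"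
    and K: "K \<in> orbits G {1..n} \<phi>" "k \<in> K"
  shows "clus_mut {1..m} k B x k \<in> sf_closure r u \<and>
         \<psi> (clus_mut {1..m} k B x k) = clus_mut (orbits G {1..m} \<phi>) K (fold_mat B) (fold_clus \<psi> x) K"
proof -
  have "k \<in> {1..m}"
    using K mutable_orbit_subset n_le_m by fastforce
  moreover have "\<forall>i\<in>{1..m}. x i \<in> sf_closure r u"
    using adm by (simp add: Gpsi_admissible_def)
  ultimately have "clus_mut {1..m} k B x k \<in> sf_closure r u \<and>
      \<psi> (clus_mut {1..m} k B x k) = clus_mut {1..m} k B (\<lambda>i. \<psi> (x i)) k"
    using sf_closure_clus_mut_hom[OF hom finite_atLeastAtMost] by blast
  moreover have "\<forall>i\<in>{1..m}. \<forall>i'\<in>orbit G \<phi> i. \<psi> (x i) = \<psi> (x i')"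
    using adm by (simp add: Gpsi_admissible_def)
  then have "\<forall>I\<in>orbits G {1..m} \<phi>. \<forall>i\<in>I. \<psi> (x i) = fold_clus \<psi> x I"
    using fold_clus_orbit by blast
  ultimately show ?thesis
    using clus_mut_fold[OF K] by simp
qed

lemma Gpsi_admissible_mut_simultaneous:
  assumes adm: "Gpsi_admissible G \<phi> m n (sf_closure r u) \<psi> (x, B)"
    and hom: "semifield_hom_on (sf_closure r u) \<psi>" "1 \<in> sf_closure r u" "\<psi> 1 = 1"
    and K: "K \<in> orbits G {1..n} \<phi>"
    and adm_mut: "G_admissible G \<phi> m n (mat_mut_simultaneous K B)"
  shows "Gpsi_admissible G \<phi> m n (sf_closure r u) \<psi>
           (clus_mut_simultaneous {1..m} K B x, mat_mut_simultaneous K B)"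
proof -
  let ?x' = "clus_mut_simultaneous {1..m} K B x"
  have x: "\<forall>i\<in>{1..m}. x i \<in> sf_closure r u" "\<forall>i\<in>{1..m}. \<forall>i'\<in>orbit G \<phi> i. \<psi> (x i) = \<psi> (x i')"
    using adm by (auto simp: Gpsi_admissible_def)
  have K_orbit: "K = orbit G \<phi> i" if "i \<in> K" for i
    using orbits_memberD[OF mutable_orbit_in_orbits[OF K] that] .
  have "\<psi> (?x' i) = \<psi> (?x' i')" if "i \<in> {1..m}" "i' \<in> orbit G \<phi> i" for i i'
  proof (cases "i \<in> K")
    case True
    then show ?thesis
      using that K_orbit clus_mut_fold_hom[OF adm hom K] by (simp add: clus_mut_simultaneous_def)
  next
    case False
    have "orbit G \<phi> i' = orbit G \<phi> i" "i \<in> orbit G \<phi> i"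
      using orbit_eq_orbit[OF that] orbit_refl[OF that(1)] .
    then have "i' \<notin> K"
      using False K_orbit by auto
    then show ?thesis
      using False that x by (simp add: clus_mut_simultaneous_def)
  qed
  moreover have "?x' i \<in> sf_closure r u" if "i \<in> {1..m}" for i
    using that x clus_mut_fold_hom[OF adm hom K] by (simp add: clus_mut_simultaneous_def)
  ultimately show ?thesis
    using adm_mut by (simp add: Gpsi_admissible_def)
qed

lemma fold_seed_mut_simultaneous:
  assumes adm: "Gpsi_admissible G \<phi> m n (sf_closure r u) \<psi> (x, B)"
    and hom: "semifield_hom_on (sf_closure r u) \<psi>" "1 \<in> sf_closure r u" "\<psi> 1 = 1"
    and K: "K \<in> orbits G {1..n} \<phi>"
  shows "folded_seed_eq (orbits G {1..m} \<phi>) (orbits G {1..n} \<phi>)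
           (fold_seed \<psi> (clus_mut_simultaneous {1..m} K B x, mat_mut_simultaneous K B))
           (seed_mut (orbits G {1..m} \<phi>) K (fold_seed \<psi> (x, B)))"
proof -
  have "fold_clus \<psi> (clus_mut_simultaneous {1..m} K B x) I =
          clus_mut (orbits G {1..m} \<phi>) K (fold_mat B) (fold_clus \<psi> x) I"
    if I: "I \<in> orbits G {1..m} \<phi>" for I
  proof -
    define i where "i = (SOME i. i \<in> I)"
    have i: "i \<in> I"
      using orbits_nonempty[OF I] by (auto simp: i_def intro: someI)
    have "fold_clus \<psi> (clus_mut_simultaneous {1..m} K B x) I = \<psi> (clus_mut_simultaneous {1..m} K B x i)"
      by (simp add: fold_clus_def i_def)
    also have "\<dots> = clus_mut (orbits G {1..m} \<phi>) K (fold_mat B) (fold_clus \<psi> x) I"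
    proof (cases "I = K")
      case True
      then show ?thesis
        using i clus_mut_fold_hom[OF adm hom K] by (simp add: clus_mut_simultaneous_def)
    next
      case False
      then have "i \<notin> K"
        using orbits_disjoint[OF I mutable_orbit_in_orbits[OF K]] i by blast
      then show ?thesis
        using False by (simp add: fold_clus_def i_def clus_mut_simultaneous_def clus_mut_def)
    qed
    finally show ?thesis .
  qed
  then show ?thesis
    using fold_mat_mut_simultaneous[OF _ _ K]
    by (simp add: folded_seed_eq_def fold_seed_def seed_mut_def)
qed

end

theorem lemma4p4p8:
  fixes G :: "('g, 'c) monoid_scheme" and \<phi> :: "'g \<Rightarrow> nat \<Rightarrow> nat"
    and m n mG :: nat and Q :: "nat \<Rightarrow> nat \<Rightarrow> nat"
    and kF :: "'a::field_char_0 set" and u x :: "nat \<Rightarrow> 'a"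
    and kG :: "'b::field_char_0 set" and v :: "nat \<Rightarrow> 'b"
    and \<psi> :: "'a \<Rightarrow> 'b" and K :: "nat set"
  assumes nm: "n \<le> m"
    and action: "group_action G {1..m} \<phi>"
    and mutable_stable: "\<forall>g\<in>carrier G. \<phi> g ` {1..n} \<subseteq> {1..n}"
    and mG: "mG = card (orbits G {1..m} \<phi>)"
    and F: "rational_function_field kF m u"
    and FG: "rational_function_field kG mG v"
    and psi_hom: "semifield_hom_on (sf_closure m u) \<psi>"
    and psi_surj: "\<psi> ` sf_closure m u = sf_closure mG v"
    and quiver: "is_quiver m Q"
    and seed: "free_generating kF m x"
    and adm: "Gpsi_admissible G \<phi> m n (sf_closure m u) \<psi> (x, Btil Q)"
    and K: "K \<in> orbits G {1..n} \<phi>"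
    and mutQ_adm: "quiver_G_admissible G \<phi> m n (quiver_mut_set K Q)"
  shows "Gpsi_admissible G \<phi> m n (sf_closure m u) \<psi> (seed_mut_set {1..m} K (x, Btil Q))
       \<and> folded_seed_eq (orbits G {1..m} \<phi>) (orbits G {1..n} \<phi>)
           (fold_seed \<psi> (seed_mut_set {1..m} K (x, Btil Q)))
           (seed_mut (orbits G {1..m} \<phi>) K (fold_seed \<psi> (x, Btil Q)))"
proof -
  have "G_admissible G \<phi> m n (Btil Q)"
    using adm by (simp add: Gpsi_admissible_def)
  then interpret admissible_matrix G m \<phi> n "Btil Q"
    by (intro admissible_matrix.intro[OF action] admissible_matrix_axioms.intro[OF nm mutable_stable])
  have K_finite: "finite K"
    by (rule finite_subset[OF mutable_orbit_subset[OF K] finite_atLeastAtMost])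
  have K_disconnected: "\<forall>a\<in>K. \<forall>b\<in>K. Btil Q a b = 0"
    using mutable_orbit_disconnected[OF K] by blast
  have mutation: "seed_mut_set {1..m} K (x, Btil Q) =
      (clus_mut_simultaneous {1..m} K (Btil Q) x, mat_mut_simultaneous K (Btil Q))"
    using seed_mut_set_disconnected[OF K_finite K_disconnected] .
  have "no_two_cycles Q"
    using quiver by (simp add: is_quiver_def no_two_cycles_def)
  then have adm_mut: "G_admissible G \<phi> m n (mat_mut_simultaneous K (Btil Q))"
    using mutQ_adm Btil_quiver_mut_set_disconnected[OF _ K_finite K_disconnected]
    by (simp add: quiver_G_admissible_def)
  obtain k where "k \<in> K"
    using orbits_nonempty[OF mutable_orbit_in_orbits[OF K]] by blast
  then have "1 \<le> m" "1 \<le> mG"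
    using mutable_orbit_subset[OF K] nm mutable_orbit_in_orbits[OF K] finite_orbits mG
    by (auto simp: Suc_le_eq card_gt_0_iff)
  then have one: "1 \<in> sf_closure m u" "\<psi> 1 = 1"
    using surj_semifield_hom_one[OF F FG psi_hom psi_surj] by blast+
  then show ?thesis
    unfolding mutation
    using Gpsi_admissible_mut_simultaneous[OF adm psi_hom one K adm_mut]
      fold_seed_mut_simultaneous[OF adm psi_hom one K]
    by blast
qed

end
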